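(* Let $n\ge1$. If $f,g,h:\Omega_n\to\mathbb{R}$ have mutually disjoint supports, then $\int(f+g+h)\,d\mu_n=\int(f+g)\,d\mu_n+\int(f+h)\,d\mu_n+\int(g+h)\,d\mu_n-\int f\,d\mu_n-\int g\,d\mu_n-\int h\,d\mu_n$.
   Context: For $n\ge1$, $\Omega_n=\{\omega_0,\dots,\omega_{2^n-1}\}$ is the set of strings $\alpha_0\alpha_1\cdots\alpha_n$ with $\alpha_k\in\{0,1\}$, $\alpha_0=0$, $\omega_j$ being the binary representation of $j$ (with $\alpha_n$ least significant). $D^n_{jk}=D^n(\omega_j,\omega_k)$ where $D^n(\omega,\omega')=2^{-n}\prod_{k=1}^n i^{|\alpha_k-\alpha_{k-1}|}\prod_{k=1}^n i^{-|\alpha'_k-\alpha'_{k-1}|}\,\delta_{\alpha_n\alpha'_n}$ for $\omega=\alpha_0\cdots\alpha_n$, $\omega'=\alpha'_0\cdots\alpha'_n$ ($i=\sqrt{-1}$). For $u:\Omega_n\to[0,\infty)$, $\int u\,d\mu_n=\sum_{j,k=0}^{2^n-1}\min[u(\omega_j),u(\omega_k)]\,D^n_{jk}$; for arbitrary $f:\Omega_n\to\mathbb{R}$ written as $f=f^+-f^-$ with $f^\pm\ge0$, $f^+f^-=0$, $\int f\,d\mu_n=\int f^+d\mu_n-\int f^-d\mu_n$. *)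

theory Defs
  imports "HOL-Analysis.Analysis"
begin

text \<open>Omega_n is identified with the index set {0..<2^n}: the index j stands for
  omega_j = alpha_0 alpha_1 ... alpha_n, the binary representation of j with n+1 digits,
  alpha_n least significant, so alpha_k = bit (n-k) of j (alpha_0 = 0 since j < 2^n).\<close>

definition alpha :: "nat \<Rightarrow> nat \<Rightarrow> nat \<Rightarrow> nat" where
  "alpha n j k = (j div 2 ^ (n - k)) mod 2"

definition Dn :: "nat \<Rightarrow> nat \<Rightarrow> nat \<Rightarrow> complex" where
  "Dn n j l = (1 / 2 ^ n) *
     (\<Prod>k\<in>{1..n}. \<i> ^ (nat \<bar>int (alpha n j k) - int (alpha n j (k - 1))\<bar>)) *
     (\<Prod>k\<in>{1..n}. inverse \<i> ^ (nat \<bar>int (alpha n l k) - int (alpha n l (k - 1))\<bar>)) *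
     (if alpha n j n = alpha n l n then 1 else 0)"

definition int_pos :: "nat \<Rightarrow> (nat \<Rightarrow> real) \<Rightarrow> complex" where
  "int_pos n u = (\<Sum>j<2 ^ n. \<Sum>l<2 ^ n. complex_of_real (min (u j) (u l)) * Dn n j l)"

definition int_mu :: "nat \<Rightarrow> (nat \<Rightarrow> real) \<Rightarrow> complex" where
  "int_mu n f = int_pos n (\<lambda>j. max (f j) 0) - int_pos n (\<lambda>j. max (- f j) 0)"

end

theory Submission
  imports Defs
begin

text \<open>The general case
  reduces to this one since the positive and negative parts of f + g + h are the
  sums of those of f, g and h.\<close>

lemma min_inclusion_exclusion:
  fixes a b c a' b' c' :: real
  assumes "a \<ge> 0" "b \<ge> 0" "c \<ge> 0" "a' \<ge> 0" "b' \<ge> 0" "c' \<ge> 0"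
    and "a = 0 \<or> b = 0" "a = 0 \<or> c = 0" "b = 0 \<or> c = 0"
    and "a' = 0 \<or> b' = 0" "a' = 0 \<or> c' = 0" "b' = 0 \<or> c' = 0"
  shows "min (a + b + c) (a' + b' + c') =
           min (a + b) (a' + b') + min (a + c) (a' + c') + min (b + c) (b' + c')
           - min a a' - min b b' - min c c'"
  using assms by (auto simp: min_def)

lemma int_pos_cong:
  assumes "\<And>j. j < 2 ^ n \<Longrightarrow> u j = v j"
  shows "int_pos n u = int_pos n v"
  unfolding int_pos_def using assms by (intro sum.cong refl) auto

lemma int_pos_inclusion_exclusion:
  fixes u v w :: "nat \<Rightarrow> real"
  assumes nonneg: "\<And>j. j < 2 ^ n \<Longrightarrow> u j \<ge> 0 \<and> v j \<ge> 0 \<and> w j \<ge> 0"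
    and disjoint: "\<And>j. j < 2 ^ n \<Longrightarrow>
      (u j = 0 \<or> v j = 0) \<and> (u j = 0 \<or> w j = 0) \<and> (v j = 0 \<or> w j = 0)"
  shows "int_pos n (\<lambda>j. u j + v j + w j) =
           int_pos n (\<lambda>j. u j + v j) + int_pos n (\<lambda>j. u j + w j) + int_pos n (\<lambda>j. v j + w j)
           - int_pos n u - int_pos n v - int_pos n w"
proof -
  have pointwise: "min (u j + v j + w j) (u l + v l + w l) =
      min (u j + v j) (u l + v l) + min (u j + w j) (u l + w l) + min (v j + w j) (v l + w l)
      - min (u j) (u l) - min (v j) (v l) - min (w j) (w l)"
    if "j < 2 ^ n" "l < 2 ^ n" for j l
    by (rule min_inclusion_exclusion)
      (use nonneg[OF that(1)] nonneg[OF that(2)] disjoint[OF that(1)] disjoint[OF that(2)] in auto)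
  have "int_pos n (\<lambda>j. u j + v j + w j) =
      (\<Sum>j<2 ^ n. \<Sum>l<2 ^ n. complex_of_real
        (min (u j + v j) (u l + v l) + min (u j + w j) (u l + w l) + min (v j + w j) (v l + w l)
         - min (u j) (u l) - min (v j) (v l) - min (w j) (w l)) * Dn n j l)"
    unfolding int_pos_def by (intro sum.cong refl) (simp add: pointwise)
  also have "\<dots> = int_pos n (\<lambda>j. u j + v j) + int_pos n (\<lambda>j. u j + w j)
      + int_pos n (\<lambda>j. v j + w j) - int_pos n u - int_pos n v - int_pos n w"
    unfolding int_pos_def
    by (simp add: sum.distrib[symmetric] sum_subtractf[symmetric] algebra_simps)
  finally show ?thesis .
qed

lemma int_pos_comp_inclusion_exclusion:
  fixes F :: "real \<Rightarrow> real" and f g h :: "nat \<Rightarrow> real"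
  assumes F0: "F 0 = 0" and F_nonneg: "\<And>x. F x \<ge> 0"
    and fg: "\<forall>j<2 ^ n. f j = 0 \<or> g j = 0"
    and fh: "\<forall>j<2 ^ n. f j = 0 \<or> h j = 0"
    and gh: "\<forall>j<2 ^ n. g j = 0 \<or> h j = 0"
  shows "int_pos n (\<lambda>j. F (f j + g j + h j)) =
           int_pos n (\<lambda>j. F (f j + g j)) + int_pos n (\<lambda>j. F (f j + h j))
           + int_pos n (\<lambda>j. F (g j + h j))
           - int_pos n (\<lambda>j. F (f j)) - int_pos n (\<lambda>j. F (g j)) - int_pos n (\<lambda>j. F (h j))"
proof -
  have additive: "F (a + b) = F a + F b" if "a = 0 \<or> b = 0" for a b
    using F0 that by auto
  have "f j + g j = 0 \<or> h j = 0" if "j < 2 ^ n" for j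
    using fh gh that by force
  then have split:
    "int_pos n (\<lambda>j. F (f j + g j + h j)) = int_pos n (\<lambda>j. F (f j) + F (g j) + F (h j))"
    "int_pos n (\<lambda>j. F (f j + g j)) = int_pos n (\<lambda>j. F (f j) + F (g j))"
    "int_pos n (\<lambda>j. F (f j + h j)) = int_pos n (\<lambda>j. F (f j) + F (h j))"
    "int_pos n (\<lambda>j. F (g j + h j)) = int_pos n (\<lambda>j. F (g j) + F (h j))"
    using fg fh gh by (auto intro!: int_pos_cong simp: additive)
  have "int_pos n (\<lambda>j. F (f j) + F (g j) + F (h j)) =
      int_pos n (\<lambda>j. F (f j) + F (g j)) + int_pos n (\<lambda>j. F (f j) + F (h j))
      + int_pos n (\<lambda>j. F (g j) + F (h j))
      - int_pos n (\<lambda>j. F (f j)) - int_pos n (\<lambda>j. F (g j)) - int_pos n (\<lambda>j. F (h j))"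
    by (rule int_pos_inclusion_exclusion) (use F0 F_nonneg fg fh gh in auto)
  then show ?thesis
    by (simp only: split)
qed

theorem corollary5p5:
  fixes n :: nat and f g h :: "nat \<Rightarrow> real"
  assumes "n \<ge> 1"
    and "\<forall>j<2 ^ n. f j = 0 \<or> g j = 0"
    and "\<forall>j<2 ^ n. f j = 0 \<or> h j = 0"
    and "\<forall>j<2 ^ n. g j = 0 \<or> h j = 0"
  shows "int_mu n (\<lambda>j. f j + g j + h j) =
           int_mu n (\<lambda>j. f j + g j) + int_mu n (\<lambda>j. f j + h j) + int_mu n (\<lambda>j. g j + h j)
           - int_mu n f - int_mu n g - int_mu n h"
proof -
  have positive_part: "int_pos n (\<lambda>j. max (f j + g j + h j) 0) =
      int_pos n (\<lambda>j. max (f j + g j) 0) + int_pos n (\<lambda>j. max (f j + h j) 0)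
      + int_pos n (\<lambda>j. max (g j + h j) 0)
      - int_pos n (\<lambda>j. max (f j) 0) - int_pos n (\<lambda>j. max (g j) 0) - int_pos n (\<lambda>j. max (h j) 0)"
    by (rule int_pos_comp_inclusion_exclusion) (use assms in auto)
  have negative_part: "int_pos n (\<lambda>j. max (- (f j + g j + h j)) 0) =
      int_pos n (\<lambda>j. max (- (f j + g j)) 0) + int_pos n (\<lambda>j. max (- (f j + h j)) 0)
      + int_pos n (\<lambda>j. max (- (g j + h j)) 0)
      - int_pos n (\<lambda>j. max (- f j) 0) - int_pos n (\<lambda>j. max (- g j) 0) - int_pos n (\<lambda>j. max (- h j) 0)"
    by (rule int_pos_comp_inclusion_exclusion[where F = "\<lambda>x. max (- x) 0"]) (use assms in auto)
  show ?thesis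
    unfolding int_mu_def positive_part negative_part by (simp add: algebra_simps)
qed

end
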